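(* Under $\mathsf{SBIM}(n,k,p,q_1,q_2)$ with $m=n/k$, every adaptive group testing scheme that exactly recovers $X$ from noiseless tests, using $T$ tests, satisfies $$\mathbb{E}[T]\ \ge\ m\cdot\mathbb{E}_{Z,Z'}\Big[(k-Z)\,\mathsf{h}_\mathsf{b}\big(1-(1-q_1)^Z(1-q_2)^{Z'}\big)\Big],$$ where $Z\sim\mathsf{Binom}(k,p)$ and $Z'\sim\mathsf{Binom}(n-k,p)$ are independent.
   Context: Stochastic block infection model $\mathsf{SBIM}(n,k,p,q_1,q_2)$: the vertex set $[n]$ is partitioned into $m=n/k$ known communities $\mathcal{C}_1,\dots,\mathcal{C}_m$, each of size $k$. Each vertex is independently a seed with probability $p\in(0,1]$. Then every seed $v$ independently infects each other vertex $u$ in its own community with probability $q_1\in[0,1]$ and each vertex outside its community with probability $q_2\in[0,1]$ (all transmission events mutually independent and independent of seed selection). $X_v=1$ iff $v$ is a seed or is infected by some seed. A test on $S$ returns $\bigvee_{i\in S}X_i$ noiselessly; adaptive schemes choose tests based on previous outcomes and must recover $X$ exactly. $\mathsf{h}_\mathsf{b}$ is the binary entropy function in bits. *)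

theory Defs
  imports "HOL-Probability.Probability"
begin

definition hb :: "real \<Rightarrow> real" where
  "hb x = (if x \<le> 0 \<or> x \<ge> 1 then 0
           else - x * log 2 x - (1 - x) * log 2 (1 - x))"

text \<open>Vertices are 0..n-1; comm v is the (known) community index of vertex v.
  A valid partition into m communities of size k each.\<close>
definition valid_partition :: "nat \<Rightarrow> nat \<Rightarrow> nat \<Rightarrow> (nat \<Rightarrow> nat) \<Rightarrow> bool" where
  "valid_partition n m k comm \<longleftrightarrow> n = m * k \<and>
     (\<forall>v<n. comm v < m) \<and> (\<forall>j<m. card {v. v < n \<and> comm v = j} = k)"

definition seed_pmf :: "nat \<Rightarrow> real \<Rightarrow> (nat \<Rightarrow> bool) pmf" where
  "seed_pmf n p = Pi_pmf {..<n} False (\<lambda>_. bernoulli_pmf p)"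

text \<open>Transmission indicators: edge (v,u) means seed v would infect u;
  probability q1 inside a community and q2 across communities, all independent.\<close>
definition trans_pmf :: "nat \<Rightarrow> (nat \<Rightarrow> nat) \<Rightarrow> real \<Rightarrow> real \<Rightarrow> (nat \<times> nat \<Rightarrow> bool) pmf" where
  "trans_pmf n comm q1 q2 = Pi_pmf ({..<n} \<times> {..<n}) False
     (\<lambda>(v, u). bernoulli_pmf (if comm v = comm u then q1 else q2))"

definition infection_state :: "nat \<Rightarrow> (nat \<Rightarrow> bool) \<Rightarrow> (nat \<times> nat \<Rightarrow> bool) \<Rightarrow> nat \<Rightarrow> bool" where
  "infection_state n s e u = (u < n \<and> (s u \<or> (\<exists>v<n. v \<noteq> u \<and> s v \<and> e (v, u))))"

definition SBIM :: "nat \<Rightarrow> (nat \<Rightarrow> nat) \<Rightarrow> real \<Rightarrow> real \<Rightarrow> real \<Rightarrow> (nat \<Rightarrow> bool) pmf" where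
  "SBIM n comm p q1 q2 =
     bind_pmf (seed_pmf n p) (\<lambda>s. map_pmf (infection_state n s) (trans_pmf n comm q1 q2))"

text \<open>Deterministic adaptive group testing schemes as finite decision trees:
  Test S t0 t1 performs the test on pool S and continues with t0 on a negative
  outcome, t1 on a positive one; Leaf est outputs the estimate est.\<close>
datatype gt_scheme = Leaf "nat \<Rightarrow> bool" | Test "nat set" gt_scheme gt_scheme

definition test_outcome :: "nat set \<Rightarrow> (nat \<Rightarrow> bool) \<Rightarrow> bool" where
  "test_outcome S x = (\<exists>i\<in>S. x i)"

fun num_tests :: "gt_scheme \<Rightarrow> (nat \<Rightarrow> bool) \<Rightarrow> nat" where
  "num_tests (Leaf est) x = 0"
| "num_tests (Test S t0 t1) x = Suc (if test_outcome S x then num_tests t1 x else num_tests t0 x)"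

fun scheme_output :: "gt_scheme \<Rightarrow> (nat \<Rightarrow> bool) \<Rightarrow> (nat \<Rightarrow> bool)" where
  "scheme_output (Leaf est) x = est"
| "scheme_output (Test S t0 t1) x = (if test_outcome S x then scheme_output t1 x else scheme_output t0 x)"

definition exact_recovery :: "nat \<Rightarrow> (nat \<Rightarrow> bool) pmf \<Rightarrow> gt_scheme \<Rightarrow> bool" where
  "exact_recovery n D sch \<longleftrightarrow> (\<forall>x\<in>set_pmf D. \<forall>u<n. scheme_output sch x u = x u)"

end

theory Submission
  imports Defs
begin

text \<open>
  Exact recovery makes the scheme a binary prefix code for the support of \<open>X\<close>, so Kraft's
  inequality and Gibbs' inequality give \<open>H(X) \<le> E[T]\<close>. Conditioning on the seed vector
  \<open>s\<close> can only decrease entropy, and given \<open>s\<close> the indicators \<open>X\<^sub>u\<close> are independent: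
  a non-seed \<open>u\<close> is infected with probability \<open>1 - (1 - q1)^Z (1 - q2)^Z'\<close>, where \<open>Z\<close> and
  \<open>Z'\<close> count the seeds inside and outside the community of \<open>u\<close>. Hence \<open>H(X | s)\<close> is a sum
  of binary entropies; grouping it by communities gives \<open>m\<close> terms, and in each community the
  pair \<open>(Z, Z')\<close> is distributed as \<open>Binom(k, p) \<times> Binom(n - k, p)\<close>.
\<close>

section \<open>Entropy of finitely supported distributions\<close>

text \<open>In bits. The sum is only meaningful for finite support (otherwise it is \<open>0\<close>).\<close>
definition pmf_entropy :: "'a pmf \<Rightarrow> real" where
  "pmf_entropy P = (\<Sum>x\<in>set_pmf P. pmf P x * - log 2 (pmf P x))"

lemma gibbs_inequality:
  fixes w q :: "'a \<Rightarrow> real"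
  assumes fin: "finite A" and pos: "\<And>x. x \<in> A \<Longrightarrow> w x > 0 \<and> q x > 0"
    and sum_w: "sum w A = 1" and sum_q: "sum q A \<le> 1"
  shows "(\<Sum>x\<in>A. w x * - log 2 (w x)) \<le> (\<Sum>x\<in>A. w x * - log 2 (q x))"
proof -
  have "(\<Sum>x\<in>A. w x * - log 2 (q x)) - (\<Sum>x\<in>A. w x * - log 2 (w x))
       = - (\<Sum>x\<in>A. w x * ln (q x / w x)) / ln 2"
    unfolding sum_subtractf[symmetric] sum_divide_distrib sum_negf[symmetric]
    by (intro sum.cong refl)
       (use pos in \<open>force simp: log_def ln_div algebra_simps diff_divide_distrib\<close>)
  moreover have "(\<Sum>x\<in>A. w x * ln (q x / w x)) \<le> (\<Sum>x\<in>A. w x * (q x / w x - 1))"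
    by (intro sum_mono mult_left_mono ln_le_minus_one) (auto dest: pos intro: less_imp_le)
  moreover have "(\<Sum>x\<in>A. w x * (q x / w x - 1)) = sum q A - sum w A"
    by (simp add: sum_subtractf right_diff_distrib pos less_imp_neq[symmetric] cong: sum.cong)
  ultimately show ?thesis
    using sum_w sum_q by (smt (verit) divide_nonneg_pos ln_gt_zero)
qed

lemma scheme_kraft_inequality:
  assumes "finite A" and "inj_on (scheme_output sch) A"
  shows "(\<Sum>x\<in>A. (1/2::real) ^ num_tests sch x) \<le> 1"
  using assms
proof (induction sch arbitrary: A)
  case (Leaf est)
  then have "card A \<le> 1"
    by (simp add: inj_on_def card_le_Suc0_iff_eq)
  then show ?case by simp
next
  case (Test S t0 t1)
  let ?A1 = "{x\<in>A. test_outcome S x}" and ?A0 = "{x\<in>A. \<not> test_outcome S x}"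
  have inj1: "inj_on (scheme_output t1) ?A1" and inj0: "inj_on (scheme_output t0) ?A0"
    using Test.prems(2) by (auto simp: inj_on_def)
  have "A = ?A1 \<union> ?A0"
    by auto
  then have "(\<Sum>x\<in>A. (1/2::real) ^ num_tests (Test S t0 t1) x)
      = (\<Sum>x\<in>?A1. (1/2::real) ^ num_tests (Test S t0 t1) x)
        + (\<Sum>x\<in>?A0. (1/2::real) ^ num_tests (Test S t0 t1) x)"
    using Test.prems(1)
    by (metis (no_types, lifting) sum.union_disjoint finite_Un disjoint_iff mem_Collect_eq)
  also have "\<dots> = (\<Sum>x\<in>?A1. (1/2::real) ^ num_tests t1 x) / 2
                 + (\<Sum>x\<in>?A0. (1/2::real) ^ num_tests t0 x) / 2"
    by (simp add: sum_divide_distrib)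
  also have "\<dots> \<le> 1/2 + 1/2"
    using Test.IH(1)[OF _ inj0] Test.IH(2)[OF _ inj1] Test.prems(1) by (intro add_mono) auto
  finally show ?case by simp
qed

lemma pmf_entropy_le_expected_tests:
  assumes fin: "finite (set_pmf D)" and inj: "inj_on (scheme_output sch) (set_pmf D)"
  shows "pmf_entropy D \<le> measure_pmf.expectation D (\<lambda>x. real (num_tests sch x))"
proof -
  have "pmf_entropy D \<le> (\<Sum>x\<in>set_pmf D. pmf D x * - log 2 ((1/2) ^ num_tests sch x))"
    unfolding pmf_entropy_def
  proof (rule gibbs_inequality[OF fin])
    show "sum (pmf D) (set_pmf D) = 1"
      using fin by (rule sum_pmf_eq_1) simp
  qed (simp_all add: pmf_positive scheme_kraft_inequality[OF fin inj])
  also have "\<dots> = measure_pmf.expectation D (\<lambda>x. real (num_tests sch x))"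
    by (subst integral_measure_pmf_real[OF fin]) (auto simp: log_nat_power log_divide mult.commute)
  finally show ?thesis .
qed

text \<open>This is \<open>H(X | S) \<le> H(X)\<close> for \<open>S \<sim> M\<close> and \<open>X | S = s \<sim> N s\<close>.\<close>
lemma pmf_entropy_bind_ge:
  assumes finM: "finite (set_pmf M)" and finN: "\<And>s. s \<in> set_pmf M \<Longrightarrow> finite (set_pmf (N s))"
  shows "measure_pmf.expectation M (\<lambda>s. pmf_entropy (N s)) \<le> pmf_entropy (bind_pmf M N)"
proof -
  define B where "B = bind_pmf M N"
  \<comment> \<open>Gibbs against the mixture \<open>B\<close> bounds each \<open>H(N s)\<close> by a cross entropy, and these
    cross entropies average to exactly \<open>H(B)\<close>.\<close>
  define cross where "cross s = (\<Sum>x\<in>set_pmf (N s). pmf (N s) x * - log 2 (pmf B x))" for s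
  have set_B: "set_pmf B = (\<Union>s\<in>set_pmf M. set_pmf (N s))"
    by (simp add: B_def set_bind_pmf)
  have finB: "finite (set_pmf B)"
    using set_B finM finN by auto
  have pmf_B: "pmf B x = (\<Sum>s\<in>set_pmf M. pmf M s * pmf (N s) x)" for x
    unfolding B_def pmf_bind by (subst integral_measure_pmf_real[OF finM]) (auto simp: mult.commute)
  have extend: "cross s = (\<Sum>x\<in>set_pmf B. pmf (N s) x * - log 2 (pmf B x))" if "s \<in> set_pmf M" for s
    unfolding cross_def
  proof (rule sum.mono_neutral_left[OF finB])
    show "set_pmf (N s) \<subseteq> set_pmf B"
      using set_B that by auto
  qed (simp add: set_pmf_iff)
  have "measure_pmf.expectation M (\<lambda>s. pmf_entropy (N s)) = (\<Sum>s\<in>set_pmf M. pmf M s * pmf_entropy (N s))"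
    by (subst integral_measure_pmf_real[OF finM]) (auto simp: mult.commute)
  also have "\<dots> \<le> (\<Sum>s\<in>set_pmf M. pmf M s * cross s)"
  proof (intro sum_mono mult_left_mono)
    fix s assume s: "s \<in> set_pmf M"
    show "pmf_entropy (N s) \<le> cross s"
      unfolding pmf_entropy_def cross_def
    proof (rule gibbs_inequality)
      fix x assume x: "x \<in> set_pmf (N s)"
      then have "x \<in> set_pmf B"
        using set_B s by auto
      then show "0 < pmf (N s) x \<and> 0 < pmf B x"
        using x by (simp add: pmf_positive)
    qed (use finN s in \<open>auto simp: sum_pmf_eq_1 measure_measure_pmf_finite[symmetric]\<close>)
  qed simp
  also have "\<dots> = (\<Sum>s\<in>set_pmf M. \<Sum>x\<in>set_pmf B. pmf M s * pmf (N s) x * - log 2 (pmf B x))"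
    by (intro sum.cong refl) (simp add: extend sum_distrib_left mult.assoc)
  also have "\<dots> = (\<Sum>x\<in>set_pmf B. \<Sum>s\<in>set_pmf M. pmf M s * pmf (N s) x * - log 2 (pmf B x))"
    by (rule sum.swap)
  also have "\<dots> = (\<Sum>x\<in>set_pmf B. pmf B x * - log 2 (pmf B x))"
    by (simp only: pmf_B sum_distrib_right)
  finally show ?thesis
    unfolding pmf_entropy_def B_def .
qed

lemma pmf_entropy_Pi_pmf:
  assumes finA: "finite A" and finP: "\<And>a. a \<in> A \<Longrightarrow> finite (set_pmf (P a))"
  shows "pmf_entropy (Pi_pmf A d P) = (\<Sum>a\<in>A. pmf_entropy (P a))"
proof -
  let ?Q = "Pi_pmf A d P"
  define surprise where "surprise a y = - log 2 (pmf (P a) y)" for a y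
  have set_Q: "set_pmf ?Q = PiE_dflt A d (set_pmf \<circ> P)"
    by (rule set_Pi_pmf[OF finA])
  have finQ: "finite (set_pmf ?Q)"
    unfolding set_Q using finA finP by (intro finite_PiE_dflt) auto
  have additive: "- log 2 (pmf ?Q f) = (\<Sum>a\<in>A. surprise a (f a))" if "f \<in> set_pmf ?Q" for f
  proof -
    have "\<forall>x. x \<notin> A \<longrightarrow> f x = d" and "\<And>a. a \<in> A \<Longrightarrow> pmf (P a) (f a) \<noteq> 0"
      using that unfolding set_Q PiE_dflt_def by (auto simp: set_pmf_iff)
    then show ?thesis
      using finA by (simp add: pmf_Pi log_def ln_prod surprise_def sum_divide_distrib sum_negf)
  qed
  have "pmf_entropy ?Q = (\<Sum>a\<in>A. \<Sum>f\<in>set_pmf ?Q. pmf ?Q f * surprise a (f a))"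
    unfolding pmf_entropy_def by (simp add: additive sum_distrib_left sum.swap[of _ A])
  also have "\<dots> = (\<Sum>a\<in>A. pmf_entropy (P a))"
  proof (rule sum.cong[OF refl])
    fix a assume a: "a \<in> A"
    have "(\<Sum>f\<in>set_pmf ?Q. pmf ?Q f * surprise a (f a))
        = measure_pmf.expectation ?Q (\<lambda>f. surprise a (f a))"
      by (subst integral_measure_pmf_real[OF finQ]) (auto simp: mult.commute)
    also have "\<dots> = measure_pmf.expectation (map_pmf (\<lambda>f. f a) ?Q) (surprise a)"
      by simp
    also have "map_pmf (\<lambda>f. f a) ?Q = P a"
      using Pi_pmf_component[OF finA, of a d P] a by simp
    also have "measure_pmf.expectation (P a) (surprise a) = pmf_entropy (P a)"
      unfolding pmf_entropy_def surprise_def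
      by (subst integral_measure_pmf_real[OF finP[OF a]]) (auto simp: mult.commute)
    finally show "(\<Sum>f\<in>set_pmf ?Q. pmf ?Q f * surprise a (f a)) = pmf_entropy (P a)" .
  qed
  finally show ?thesis .
qed

lemma pmf_entropy_bool: "pmf_entropy (P :: bool pmf) = hb (pmf P True)"
proof -
  have "pmf_entropy P = (\<Sum>x\<in>UNIV. pmf P x * - log 2 (pmf P x))"
    unfolding pmf_entropy_def by (rule sum.mono_neutral_left) (auto simp: set_pmf_eq)
  also have "\<dots> = hb (pmf P True)"
    using pmf_le_1[of P True]
    by (cases "pmf P True = 0"; cases "pmf P True = 1")
       (auto simp: UNIV_bool pmf_False_conv_True hb_def log_def)
  finally show ?thesis .
qed

lemma Pi_pmf_Times_by_snd:
  assumes finA: "finite A" and finB: "finite B"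
  shows "Pi_pmf (A \<times> B) d (\<lambda>(a, b). P a b)
       = map_pmf (\<lambda>F (a, b). F b a) (Pi_pmf B (\<lambda>_. d) (\<lambda>b. Pi_pmf A d (\<lambda>a. P a b)))"
    (is "?lhs = map_pmf ?uncurry ?C")
proof (rule pmf_eqI)
  fix e :: "'a \<times> 'b \<Rightarrow> 'c"
  define G where "G b a = e (a, b)" for b a
  have "inj ?uncurry"
    by (rule injI) (metis case_prod_conv ext)
  moreover have "e = ?uncurry G"
    by (auto simp: G_def)
  ultimately have "pmf (map_pmf ?uncurry ?C) e = pmf ?C G"
    using pmf_map_inj' by metis
  also have "\<dots> = pmf ?lhs e"
  proof (cases "\<forall>a b. (a, b) \<notin> A \<times> B \<longrightarrow> e (a, b) = d")
    case True
    have "pmf ?C G = (\<Prod>b\<in>B. \<Prod>a\<in>A. pmf (P a b) (e (a, b)))"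
      using True finA finB by (simp add: pmf_Pi G_def fun_eq_iff)
    also have "\<dots> = (\<Prod>a\<in>A. \<Prod>b\<in>B. pmf (P a b) (e (a, b)))"
      by (rule prod.swap)
    also have "\<dots> = pmf ?lhs e"
      using True finA finB by (simp add: pmf_Pi prod.cartesian_product case_prod_unfold)
    finally show ?thesis .
  next
    case False
    then have "G \<notin> set_pmf ?C"
      using finA finB by (auto simp: set_Pi_pmf PiE_dflt_def G_def fun_eq_iff)
    then show ?thesis
      using False finA finB by (simp add: set_pmf_iff pmf_Pi_outside)
  qed
  finally show "pmf ?lhs e = pmf (map_pmf ?uncurry ?C) e" ..
qed

section \<open>The infection vector given the seeds\<close>

lemma finite_bool_funs_within:
  assumes "finite A"
  shows "finite {f :: 'a \<Rightarrow> bool. \<forall>x. f x \<longrightarrow> x \<in> A}"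
  by (rule finite_subset[OF _ finite_PiE_dflt[OF assms, of "\<lambda>_. UNIV" False]])
     (auto simp: PiE_dflt_def)

lemma finite_set_pmf_seed_pmf: "finite (set_pmf (seed_pmf n p))"
  unfolding seed_pmf_def
  by (rule finite_subset[OF _ finite_bool_funs_within[of "{..<n}"]])
     (use set_Pi_pmf_subset[of "{..<n}" False] in auto)

lemma finite_set_pmf_infection_state:
  "finite (set_pmf (map_pmf (infection_state n s) (trans_pmf n comm q1 q2)))"
  by (rule finite_subset[OF _ finite_bool_funs_within[of "{..<n}"]]) (auto simp: infection_state_def)

definition trans_prob :: "(nat \<Rightarrow> nat) \<Rightarrow> real \<Rightarrow> real \<Rightarrow> nat \<Rightarrow> nat \<Rightarrow> real" where
  "trans_prob comm q1 q2 v u = (if comm v = comm u then q1 else q2)"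

definition incoming_pmf :: "nat \<Rightarrow> (nat \<Rightarrow> nat) \<Rightarrow> real \<Rightarrow> real \<Rightarrow> nat \<Rightarrow> (nat \<Rightarrow> bool) pmf" where
  "incoming_pmf n comm q1 q2 u = Pi_pmf {..<n} False (\<lambda>v. bernoulli_pmf (trans_prob comm q1 q2 v u))"

definition infected_by :: "nat \<Rightarrow> (nat \<Rightarrow> bool) \<Rightarrow> nat \<Rightarrow> (nat \<Rightarrow> bool) \<Rightarrow> bool" where
  "infected_by n s u c \<longleftrightarrow> s u \<or> (\<exists>v<n. v \<noteq> u \<and> s v \<and> c v)"

definition seeds_within :: "nat \<Rightarrow> (nat \<Rightarrow> nat) \<Rightarrow> (nat \<Rightarrow> bool) \<Rightarrow> nat \<Rightarrow> nat" where
  "seeds_within n comm s j = card {v. v < n \<and> comm v = j \<and> s v}"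

definition seeds_outside :: "nat \<Rightarrow> (nat \<Rightarrow> nat) \<Rightarrow> (nat \<Rightarrow> bool) \<Rightarrow> nat \<Rightarrow> nat" where
  "seeds_outside n comm s j = card {v. v < n \<and> comm v \<noteq> j \<and> s v}"

lemma infection_state_eq_Pi_pmf:
  "map_pmf (infection_state n s) (trans_pmf n comm q1 q2)
     = Pi_pmf {..<n} False (\<lambda>u. map_pmf (infected_by n s u) (incoming_pmf n comm q1 q2 u))"
proof -
  let ?C = "Pi_pmf {..<n} (\<lambda>_. False) (incoming_pmf n comm q1 q2)"
  have "Pi_pmf {..<n} False (\<lambda>u. map_pmf (infected_by n s u) (incoming_pmf n comm q1 q2 u))
      = bind_pmf ?C (\<lambda>F. Pi_pmf {..<n} False (\<lambda>u. return_pmf (infected_by n s u (F u))))"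
    unfolding map_pmf_def by (rule Pi_pmf_bind) simp
  also have "\<dots> = map_pmf (\<lambda>F u. u < n \<and> infected_by n s u (F u)) ?C"
    by (auto simp: map_pmf_def intro!: bind_pmf_cong)
  also have "\<dots> = map_pmf (infection_state n s) (map_pmf (\<lambda>F (v, u). F u v) ?C)"
    by (simp add: pmf.map_comp o_def, intro map_pmf_cong refl ext)
       (auto simp: infection_state_def infected_by_def)
  also have "map_pmf (\<lambda>F (v, u). F u v) ?C = trans_pmf n comm q1 q2"
    unfolding trans_pmf_def incoming_pmf_def trans_prob_def
    by (subst Pi_pmf_Times_by_snd[symmetric]) (auto intro: Pi_pmf_cong)
  finally show ?thesis ..
qed

lemma pmf_infected_by:
  assumes "0 \<le> q1" "q1 \<le> 1" "0 \<le> q2" "q2 \<le> 1" and "\<not> s u"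
  shows "pmf (map_pmf (infected_by n s u) (incoming_pmf n comm q1 q2 u)) True
    = 1 - (1 - q1) ^ seeds_within n comm s (comm u) * (1 - q2) ^ seeds_outside n comm s (comm u)"
proof -
  let ?M = "incoming_pmf n comm q1 q2 u"
  let ?escape = "\<lambda>v. if v \<noteq> u \<and> s v then {False} else UNIV"
  have q: "0 \<le> trans_prob comm q1 q2 v u" "trans_prob comm q1 q2 v u \<le> 1" for v
    using assms by (auto simp: trans_prob_def)
  have "{c. infected_by n s u c} = UNIV - Pi {..<n} ?escape"
    using \<open>\<not> s u\<close> by (auto simp: infected_by_def Pi_def split: if_splits)
  then have "pmf (map_pmf (infected_by n s u) ?M) True = 1 - measure_pmf.prob ?M (Pi {..<n} ?escape)"
    using measure_pmf.prob_compl[of "Pi {..<n} ?escape" ?M] by (simp add: pmf_map vimage_def)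
  also have "measure_pmf.prob ?M (Pi {..<n} ?escape)
      = (\<Prod>v<n. measure_pmf.prob (bernoulli_pmf (trans_prob comm q1 q2 v u)) (?escape v))"
    unfolding incoming_pmf_def by (rule measure_Pi_pmf_Pi) simp
  also have "\<dots> = (\<Prod>v<n. (if s v \<and> comm v = comm u then 1 - q1 else 1)
                       * (if s v \<and> comm v \<noteq> comm u then 1 - q2 else 1))"
    using \<open>\<not> s u\<close> assms(1-4)
    by (intro prod.cong refl) (auto simp: measure_pmf_single q trans_prob_def)
  also have "\<dots> = (1 - q1) ^ seeds_within n comm s (comm u) * (1 - q2) ^ seeds_outside n comm s (comm u)"
    by (simp add: prod.distrib prod.inter_filter[symmetric] seeds_within_def seeds_outside_def
        conj_commute conj_left_commute)
  finally show ?thesis .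
qed

lemma pmf_entropy_infection_given_seeds:
  assumes "0 \<le> q1" "q1 \<le> 1" "0 \<le> q2" "q2 \<le> 1"
  shows "pmf_entropy (map_pmf (infection_state n s) (trans_pmf n comm q1 q2))
    = (\<Sum>u<n. if s u then 0
              else hb (1 - (1 - q1) ^ seeds_within n comm s (comm u)
                         * (1 - q2) ^ seeds_outside n comm s (comm u)))"
proof -
  have "hb (pmf (map_pmf (infected_by n s u) (incoming_pmf n comm q1 q2 u)) True)
      = (if s u then 0 else hb (1 - (1 - q1) ^ seeds_within n comm s (comm u)
                                  * (1 - q2) ^ seeds_outside n comm s (comm u)))" for u
  proof (cases "s u")
    case True
    then have "map_pmf (infected_by n s u) (incoming_pmf n comm q1 q2 u) = return_pmf True"
      by (simp add: infected_by_def map_pmf_const cong: map_pmf_cong)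
    then show ?thesis
      using True by (simp add: hb_def)
  qed (simp add: assms pmf_infected_by)
  then show ?thesis
    unfolding infection_state_eq_Pi_pmf by (simp add: pmf_entropy_Pi_pmf pmf_entropy_bool)
qed

lemma sum_nonseeds_by_community:
  fixes f :: "nat \<Rightarrow> real"
  assumes "valid_partition n m k comm"
  shows "(\<Sum>u<n. if s u then 0 else f (comm u))
       = (\<Sum>j<m. real (k - seeds_within n comm s j) * f j)"
proof -
  have comm_lt: "\<forall>v<n. comm v < m" and card_comm: "\<And>j. j < m \<Longrightarrow> card {v. v < n \<and> comm v = j} = k"
    using assms unfolding valid_partition_def by auto
  have "(\<Sum>u<n. if s u then 0 else f (comm u))
      = (\<Sum>j<m. \<Sum>u\<in>{v. v \<in> {..<n} \<and> comm v = j}. if s u then 0 else f (comm u))"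
    by (rule sum.group[symmetric]) (use comm_lt in auto)
  also have "\<dots> = (\<Sum>j<m. real (k - seeds_within n comm s j) * f j)"
  proof (rule sum.cong[OF refl])
    fix j assume j: "j \<in> {..<m}"
    define C where "C = {v. v < n \<and> comm v = j}"
    have "{u\<in>C. \<not> s u} = C - {v. v < n \<and> comm v = j \<and> s v}"
      by (auto simp: C_def)
    then have "card {u\<in>C. \<not> s u} = card C - seeds_within n comm s j"
      unfolding seeds_within_def by (simp add: card_Diff_subset C_def Collect_mono)
    then have "card {u\<in>C. \<not> s u} = k - seeds_within n comm s j"
      using card_comm j by (simp add: C_def)
    moreover have "(\<Sum>u\<in>C. if s u then 0 else f (comm u)) = (\<Sum>u\<in>{u\<in>C. \<not> s u}. f j)"
      by (subst sum.inter_filter) (auto simp: C_def intro!: sum.cong)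
    ultimately show "(\<Sum>u\<in>{v. v \<in> {..<n} \<and> comm v = j}. if s u then 0 else f (comm u))
        = real (k - seeds_within n comm s j) * f j"
      by (simp add: C_def)
  qed
  finally show ?thesis .
qed

lemma seed_counts_binomial:
  assumes "valid_partition n m k comm" and "j < m" and "0 \<le> p" "p \<le> 1"
  shows "map_pmf (\<lambda>s. (seeds_within n comm s j, seeds_outside n comm s j)) (seed_pmf n p)
       = pair_pmf (binomial_pmf k p) (binomial_pmf (n - k) p)"
proof -
  define A where "A = {v. v < n \<and> comm v = j}"
  define B where "B = {v. v < n \<and> comm v \<noteq> j}"
  let ?coins = "\<lambda>C. Pi_pmf C False (\<lambda>_. bernoulli_pmf p)"
  have fin: "finite A" "finite B" and disj: "A \<inter> B = {}" and union: "{..<n} = A \<union> B"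
    by (auto simp: A_def B_def)
  have card_A: "card A = k"
    using assms(1,2) unfolding valid_partition_def A_def by auto
  moreover have "card A + card B = n"
    using card_Un_disjoint[OF fin disj] union by (metis card_lessThan)
  ultimately have card_B: "card B = n - k" by simp
  have "seed_pmf n p = map_pmf (\<lambda>(f, g) x. if x \<in> A then f x else g x) (pair_pmf (?coins A) (?coins B))"
    unfolding seed_pmf_def union by (rule Pi_pmf_union[OF fin disj])
  moreover have "{v. v < n \<and> comm v = j \<and> (if v \<in> A then f v else g v)} = {v\<in>A. f v}"
    and "{v. v < n \<and> comm v \<noteq> j \<and> (if v \<in> A then f v else g v)} = {v\<in>B. g v}" for f g
    by (auto simp: A_def B_def)
  ultimately have "map_pmf (\<lambda>s. (seeds_within n comm s j, seeds_outside n comm s j)) (seed_pmf n p)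
      = map_pmf (\<lambda>(f, g). (card {v\<in>A. f v}, card {v\<in>B. g v})) (pair_pmf (?coins A) (?coins B))"
    by (simp add: pmf.map_comp o_def case_prod_unfold seeds_within_def seeds_outside_def)
  also have "\<dots> = pair_pmf (map_pmf (\<lambda>f. card {v\<in>A. f v}) (?coins A))
                          (map_pmf (\<lambda>g. card {v\<in>B. g v}) (?coins B))"
    by (rule map_pair)
  also have "\<dots> = pair_pmf (binomial_pmf k p) (binomial_pmf (n - k) p)"
    using assms(3,4) fin card_A card_B by (simp add: binomial_pmf_altdef'[symmetric])
  finally show ?thesis .
qed

lemma expected_infection_entropy_given_seeds:
  assumes "valid_partition n m k comm" and "0 \<le> p" "p \<le> 1"
    and "0 \<le> q1" "q1 \<le> 1" "0 \<le> q2" "q2 \<le> 1"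
  shows "measure_pmf.expectation (seed_pmf n p)
           (\<lambda>s. pmf_entropy (map_pmf (infection_state n s) (trans_pmf n comm q1 q2)))
       = real m * measure_pmf.expectation (pair_pmf (binomial_pmf k p) (binomial_pmf (n - k) p))
           (\<lambda>(z, z'). real (k - z) * hb (1 - (1 - q1) ^ z * (1 - q2) ^ z'))"
proof -
  define \<phi> where "\<phi> = (\<lambda>(z, z'). real (k - z) * hb (1 - (1 - q1) ^ z * (1 - q2) ^ z'))"
  define counts where "counts j = (\<lambda>s. (seeds_within n comm s j, seeds_outside n comm s j))" for j
  have "pmf_entropy (map_pmf (infection_state n s) (trans_pmf n comm q1 q2)) = (\<Sum>j<m. \<phi> (counts j s))"
    for s
    using sum_nonseeds_by_community[OF assms(1), where
        f = "\<lambda>j. hb (1 - (1 - q1) ^ seeds_within n comm s j * (1 - q2) ^ seeds_outside n comm s j)"]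
    by (simp add: assms pmf_entropy_infection_given_seeds \<phi>_def counts_def)
  then have "measure_pmf.expectation (seed_pmf n p)
          (\<lambda>s. pmf_entropy (map_pmf (infection_state n s) (trans_pmf n comm q1 q2)))
      = measure_pmf.expectation (seed_pmf n p) (\<lambda>s. \<Sum>j<m. \<phi> (counts j s))"
    by simp
  also have "\<dots> = (\<Sum>j<m. measure_pmf.expectation (seed_pmf n p) (\<lambda>s. \<phi> (counts j s)))"
    using finite_set_pmf_seed_pmf
    by (subst Bochner_Integration.integral_sum) (auto intro: integrable_measure_pmf_finite)
  also have "\<dots> = (\<Sum>j<m. measure_pmf.expectation (map_pmf (counts j) (seed_pmf n p)) \<phi>)"
    by simp
  also have "\<dots> = (\<Sum>j<m. measure_pmf.expectation (pair_pmf (binomial_pmf k p) (binomial_pmf (n - k) p)) \<phi>)"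
    using seed_counts_binomial[OF assms(1) _ assms(2,3)]
    by (intro sum.cong refl) (simp only: lessThan_iff counts_def)
  also have "\<dots> = real m * measure_pmf.expectation (pair_pmf (binomial_pmf k p) (binomial_pmf (n - k) p)) \<phi>"
    by simp
  finally show ?thesis
    unfolding \<phi>_def .
qed

lemma infected_vertices_lt:
  assumes "x \<in> set_pmf (SBIM n comm p q1 q2)" and "x u"
  shows "u < n"
  using assms by (auto simp: SBIM_def set_bind_pmf infection_state_def)

lemma finite_set_pmf_SBIM: "finite (set_pmf (SBIM n comm p q1 q2))"
  by (rule finite_subset[OF _ finite_bool_funs_within[of "{..<n}"]]) (auto dest: infected_vertices_lt)

lemma exact_recovery_inj_on_SBIM:
  assumes "exact_recovery n (SBIM n comm p q1 q2) sch"
  shows "inj_on (scheme_output sch) (set_pmf (SBIM n comm p q1 q2))"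
proof (rule inj_onI, rule ext)
  fix x y u
  assume x: "x \<in> set_pmf (SBIM n comm p q1 q2)" and y: "y \<in> set_pmf (SBIM n comm p q1 q2)"
    and out: "scheme_output sch x = scheme_output sch y"
  show "x u = y u"
  proof (cases "u < n")
    case True
    then show ?thesis
      using assms x y out unfolding exact_recovery_def by metis
  qed (use x y in \<open>auto dest: infected_vertices_lt\<close>)
qed

theorem lemma5:
  fixes n m k :: nat and comm :: "nat \<Rightarrow> nat" and p q1 q2 :: real and sch :: gt_scheme
  assumes "k > 0"
    and "valid_partition n m k comm"
    and "0 < p" "p \<le> 1"
    and "0 \<le> q1" "q1 \<le> 1" "0 \<le> q2" "q2 \<le> 1"
    and "exact_recovery n (SBIM n comm p q1 q2) sch"
  shows "measure_pmf.expectation (SBIM n comm p q1 q2) (\<lambda>x. real (num_tests sch x))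
     \<ge> real m * measure_pmf.expectation (pair_pmf (binomial_pmf k p) (binomial_pmf (n - k) p))
          (\<lambda>(z, z'). real (k - z) * hb (1 - (1 - q1) ^ z * (1 - q2) ^ z'))"
proof -
  have "real m * measure_pmf.expectation (pair_pmf (binomial_pmf k p) (binomial_pmf (n - k) p))
          (\<lambda>(z, z'). real (k - z) * hb (1 - (1 - q1) ^ z * (1 - q2) ^ z'))
      = measure_pmf.expectation (seed_pmf n p)
          (\<lambda>s. pmf_entropy (map_pmf (infection_state n s) (trans_pmf n comm q1 q2)))"
    using expected_infection_entropy_given_seeds[OF assms(2) less_imp_le[OF assms(3)] assms(4-8)]
    by (rule sym)
  also have "\<dots> \<le> pmf_entropy (SBIM n comm p q1 q2)"
    unfolding SBIM_def
    by (rule pmf_entropy_bind_ge[OF finite_set_pmf_seed_pmf finite_set_pmf_infection_state])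
  also have "\<dots> \<le> measure_pmf.expectation (SBIM n comm p q1 q2) (\<lambda>x. real (num_tests sch x))"
    by (rule pmf_entropy_le_expected_tests[OF finite_set_pmf_SBIM exact_recovery_inj_on_SBIM[OF assms(9)]])
  finally show ?thesis .
qed

end
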